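(* Let $\alpha>-1$ and let $\Sigma$ be a compact $\alpha$-stationary surface whose boundary $\partial\Sigma$ is a circle contained in a horizontal plane $\{z=c\}$ with center on the $z$-axis. Let $D$ be the horizontal closed round disc bounded by $\partial\Sigma$, viewed as a subset of $\mathbb R^2$ (the $xy$-coordinates). Then $\Sigma$ is contained in the vertical solid cylinder $D\times\mathbb R$.
   Context: Let $\Sigma$ be a connected oriented surface immersed in $\mathbb R^3\setminus\{0\}$ with unit normal $\nu$ and mean curvature $H$ (sum of the principal curvatures). For $\alpha\in\mathbb R$, $\Sigma$ is called $\alpha$-stationary if $H(p)=\alpha\,\frac{\langle\nu(p),p\rangle}{|p|^2}$ for all $p\in\Sigma$. A compact surface $\Sigma$ with boundary is said to have boundary (or span) a curve $\Gamma$ if it is given by an immersion whose restriction to $\partial\Sigma$ is a diffeomorphism onto $\Gamma$. *)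

theory Defs
  imports "HOL-Analysis.Analysis"
begin

text \<open>Closed upper half-plane, the model space for surfaces with boundary.\<close>
definition halfplane :: "(real \<times> real) set" where
  "halfplane = {z. snd z \<ge> 0}"

text \<open>Mean curvature (sum of principal curvatures) of a parametrisation with
  first derivatives xu, xv, second derivatives xuu, xuv, xvv, w.r.t. the unit
  normal N; second fundamental form e = xuu.N etc.  With this convention a sphere
  with inward normal has positive mean curvature.\<close>
definition mean_curv ::
  "real^3 \<Rightarrow> real^3 \<Rightarrow> real^3 \<Rightarrow> real^3 \<Rightarrow> real^3 \<Rightarrow> real^3 \<Rightarrow> real" where
  "mean_curv N xu xv xuu xuv xvv =
     (let E = xu \<bullet> xu; F = xu \<bullet> xv; G = xv \<bullet> xv;
          e = xuu \<bullet> N; f = xuv \<bullet> N; g = xvv \<bullet> N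
      in (e * G - 2 * f * F + g * E) / (E * G - F\<^sup>2))"

definition local_param ::
  "'m topology \<Rightarrow> ('m \<Rightarrow> real^3) \<Rightarrow> (real \<times> real \<Rightarrow> 'm) \<Rightarrow> (real \<times> real) set
   \<Rightarrow> (real \<times> real \<Rightarrow> real^3) \<Rightarrow> (real \<times> real \<Rightarrow> real^3) \<Rightarrow> (real \<times> real \<Rightarrow> real^3)
   \<Rightarrow> (real \<times> real \<Rightarrow> real^3) \<Rightarrow> (real \<times> real \<Rightarrow> real^3) \<Rightarrow> (real \<times> real \<Rightarrow> real^3) \<Rightarrow> bool"
  where
  "local_param T X phi U g gu gv guu guv gvv \<longleftrightarrow>
     openin (top_of_set halfplane) U \<and>
     openin T (phi ` U) \<and>
     homeomorphic_map (top_of_set U) (subtopology T (phi ` U)) phi \<and>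
     (\<exists>W. open W \<and> U \<subseteq> W \<and>
        (\<forall>z\<in>W. (g has_derivative (\<lambda>h. fst h *\<^sub>R gu z + snd h *\<^sub>R gv z)) (at z)) \<and>
        (\<forall>z\<in>W. (gu has_derivative (\<lambda>h. fst h *\<^sub>R guu z + snd h *\<^sub>R guv z)) (at z)) \<and>
        (\<forall>z\<in>W. (gv has_derivative (\<lambda>h. fst h *\<^sub>R guv z + snd h *\<^sub>R gvv z)) (at z)) \<and>
        continuous_on W guu \<and> continuous_on W guv \<and> continuous_on W gvv) \<and>
     (\<forall>z\<in>U. g z = X (phi z)) \<and>
     (\<forall>z\<in>U. cross3 (gu z) (gv z) \<noteq> 0)"

definition compact_immersed_surface :: "'m topology \<Rightarrow> ('m \<Rightarrow> real^3) \<Rightarrow> bool" where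
  "compact_immersed_surface T X \<longleftrightarrow>
     compact_space T \<and> connected_space T \<and> Hausdorff_space T \<and>
     (\<forall>m\<in>topspace T. \<exists>phi U g gu gv guu guv gvv.
        local_param T X phi U g gu gv guu guv gvv \<and> m \<in> phi ` U)"

definition surf_boundary :: "'m topology \<Rightarrow> ('m \<Rightarrow> real^3) \<Rightarrow> 'm set" where
  "surf_boundary T X = {m. \<exists>phi U g gu gv guu guv gvv.
        local_param T X phi U g gu gv guu guv gvv \<and> (\<exists>z\<in>U. snd z = 0 \<and> phi z = m)}"

definition alpha_stationary_wrt ::
  "real \<Rightarrow> 'm topology \<Rightarrow> ('m \<Rightarrow> real^3) \<Rightarrow> ('m \<Rightarrow> real^3) \<Rightarrow> bool" where
  "alpha_stationary_wrt \<alpha> T X nu \<longleftrightarrow>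
     continuous_map T euclidean nu \<and>
     (\<forall>m\<in>topspace T. norm (nu m) = 1 \<and> X m \<noteq> 0) \<and>
     (\<forall>phi U g gu gv guu guv gvv. local_param T X phi U g gu gv guu guv gvv \<longrightarrow>
        (\<forall>z\<in>U. nu (phi z) \<bullet> gu z = 0 \<and> nu (phi z) \<bullet> gv z = 0 \<and>
           mean_curv (nu (phi z)) (gu z) (gv z) (guu z) (guv z) (gvv z)
             = \<alpha> * (nu (phi z) \<bullet> g z) / (norm (g z))\<^sup>2))"

definition alpha_stationary :: "real \<Rightarrow> 'm topology \<Rightarrow> ('m \<Rightarrow> real^3) \<Rightarrow> bool" where
  "alpha_stationary \<alpha> T X \<longleftrightarrow> (\<exists>nu. alpha_stationary_wrt \<alpha> T X nu)"

end

theory Submission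
  imports Defs
begin

text \<open>Let \<open>\<rho> = x\<^sup>2 + y\<^sup>2\<close> be the squared distance to the vertical axis. On the compact surface
  \<open>\<rho>\<close> attains its maximum; if the maximum exceeded \<open>r\<^sup>2\<close> it would be attained at an interior
  point. There the surface is tangent to the vertical cylinder through the point, so the unit
  normal is horizontal and \<open>(x, y, 0) = \<langle>\<nu>, p\<rangle> \<nu>\<close>. Hence the surface Laplacian satisfies
  \<open>\<Delta>\<rho>/2 = |\<nabla>x|\<^sup>2 + |\<nabla>y|\<^sup>2 + H \<langle>\<nu>, (x, y, 0)\<rangle> \<ge> 1 + \<alpha> (x\<^sup>2 + y\<^sup>2) / |p|\<^sup>2 > 0\<close>
  by \<open>\<alpha>\<close>-stationarity and \<open>\<alpha> > -1\<close>, while at an interior maximum the Hessian of \<open>\<rho>\<close> in a chart,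
  hence its trace with respect to the first fundamental form, is nonpositive.\<close>

definition horizontal :: "real^3 \<Rightarrow> real^3" where
  "horizontal p = (\<chi> i. if i = 3 then 0 else p $ i)"

lemma bounded_linear_horizontal: "bounded_linear horizontal"
  unfolding linear_conv_bounded_linear[symmetric] by (auto simp: linear_iff vec_eq_iff horizontal_def)

lemma horizontal_add: "horizontal (p + q) = horizontal p + horizontal q"
  by (simp add: vec_eq_iff horizontal_def)

lemma horizontal_scaleR: "horizontal (c *\<^sub>R p) = c *\<^sub>R horizontal p"
  by (simp add: vec_eq_iff horizontal_def)

lemma horizontal_nth_3 [simp]: "horizontal p $ 3 = 0"
  by (simp add: horizontal_def)

lemma norm_horizontal_sq: "(norm (horizontal p))\<^sup>2 = (p $ 1)\<^sup>2 + (p $ 2)\<^sup>2"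
  unfolding power2_norm_eq_inner by (simp add: inner_vec_def sum_3 horizontal_def power2_eq_square)

lemma norm_horizontal_le: "norm (horizontal p) \<le> norm p"
  unfolding norm_le by (simp add: inner_vec_def sum_3 horizontal_def)

lemma inner_horizontal_right: "q $ 3 = 0 \<Longrightarrow> q \<bullet> horizontal p = q \<bullet> p"
  by (simp add: inner_vec_def sum_3 horizontal_def)

text \<open>Divided by \<open>EG - F\<^sup>2 = |u \<times> v|\<^sup>2\<close>, the left side is \<open>|\<nabla>x|\<^sup>2 + |\<nabla>y|\<^sup>2\<close> on a surface
  with tangent vectors \<open>u, v\<close>, and the right side is \<open>1 + \<nu>\<^sub>3\<^sup>2\<close>.\<close>
lemma horizontal_gram_identity:
  "(v \<bullet> v) * (norm (horizontal u))\<^sup>2 - 2 * (u \<bullet> v) * (horizontal u \<bullet> horizontal v)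
     + (u \<bullet> u) * (norm (horizontal v))\<^sup>2 = (norm (cross3 u v))\<^sup>2 + (cross3 u v $ 3)\<^sup>2"
  unfolding power2_norm_eq_inner
  by (simp add: inner_vec_def sum_3 horizontal_def cross3_def vector_def power2_eq_square algebra_simps)

lemma gram_det_eq_norm_cross: "(u \<bullet> u) * (v \<bullet> v) - (u \<bullet> v)\<^sup>2 = (norm (cross3 u v))\<^sup>2"
  unfolding norm_cross by (simp add: power2_norm_eq_inner)

lemma power2_norm_scaleR_add:
  fixes x y :: "'a::real_inner"
  shows "(norm (a *\<^sub>R x + b *\<^sub>R y))\<^sup>2 = a\<^sup>2 * (norm x)\<^sup>2 + 2 * a * b * (x \<bullet> y) + b\<^sup>2 * (norm y)\<^sup>2"
  unfolding power2_norm_eq_inner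
  by (simp add: inner_add_left inner_add_right inner_commute[of y x] algebra_simps power2_eq_square)

lemma orthogonal_tangents_parallel_cross:
  assumes "w \<bullet> u = 0" "w \<bullet> v = 0"
  shows "(cross3 u v \<bullet> cross3 u v) *\<^sub>R w = (cross3 u v \<bullet> w) *\<^sub>R cross3 u v"
proof -
  have "cross3 (cross3 u v) w = 0"
    using Lagrange[of w u v] assms by (metis cross_skew neg_equal_0_iff_equal scale_eq_0_iff diff_zero)
  then show ?thesis
    using Lagrange[of "cross3 u v" "cross3 u v" w] by (simp add: inner_commute)
qed

lemma orthogonal_tangents_eq_normal_scaled:
  assumes "cross3 u v \<noteq> 0" and "n \<bullet> u = 0" "n \<bullet> v = 0" "norm n = 1"
    and "w \<bullet> u = 0" "w \<bullet> v = 0"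
  shows "w = (w \<bullet> n) *\<^sub>R n"
proof -
  define c where "c = cross3 u v"
  have "n \<bullet> n = 1" using assms(4) by (simp add: norm_eq_1)
  have "c \<bullet> c \<noteq> 0" using assms(1) by (simp add: c_def)
  have n: "(c \<bullet> c) *\<^sub>R n = (c \<bullet> n) *\<^sub>R c" and w: "(c \<bullet> c) *\<^sub>R w = (c \<bullet> w) *\<^sub>R c"
    using orthogonal_tangents_parallel_cross assms unfolding c_def by blast+
  have "c \<bullet> n \<noteq> 0" using n \<open>c \<bullet> c \<noteq> 0\<close> assms(4) by force
  have "(c \<bullet> c) *\<^sub>R (((c \<bullet> w) / (c \<bullet> n)) *\<^sub>R n) = (c \<bullet> c) *\<^sub>R w"
    using \<open>c \<bullet> n \<noteq> 0\<close> by (simp only: scaleR_left_commute[of "c \<bullet> c"] n w) simp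
  then have "w = ((c \<bullet> w) / (c \<bullet> n)) *\<^sub>R n"
    using \<open>c \<bullet> c \<noteq> 0\<close> by (metis scaleR_cancel_left)
  moreover have "w \<bullet> n = (c \<bullet> w) / (c \<bullet> n)"
    by (subst (1) calculation) (simp add: \<open>n \<bullet> n = 1\<close>)
  ultimately show ?thesis by simp
qed

lemma horizontal_critical_eq_normal_scaled:
  assumes "cross3 u v \<noteq> 0" and "n \<bullet> u = 0" "n \<bullet> v = 0" "norm n = 1"
    and "horizontal p \<noteq> 0" "horizontal p \<bullet> u = 0" "horizontal p \<bullet> v = 0"
  shows "horizontal p = (n \<bullet> p) *\<^sub>R n"
proof -
  define \<tau> where "\<tau> = horizontal p \<bullet> n"
  have p_eq: "horizontal p = \<tau> *\<^sub>R n"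
    unfolding \<tau>_def using orthogonal_tangents_eq_normal_scaled assms(1-4,6,7) .
  then have "\<tau> \<noteq> 0" using assms(5) by auto
  then have "n $ 3 = 0" using arg_cong[OF p_eq, of "\<lambda>x. x $ 3"] by simp
  then have "n \<bullet> p = \<tau>"
    using inner_horizontal_right[of n p] assms(4) by (simp add: p_eq norm_eq_1)
  with p_eq show ?thesis by simp
qed

lemma one_add_mult_pos:
  fixes \<alpha> t :: real
  assumes "\<alpha> > -1" "0 < t" "t \<le> 1"
  shows "1 + \<alpha> * t > 0"
proof (cases "\<alpha> \<ge> 0")
  case True
  then show ?thesis using assms(2) by (simp add: add_pos_nonneg)
next
  case False
  then have "\<alpha> * t \<ge> \<alpha>" using mult_left_mono_neg[OF assms(3), of \<alpha>] by simp
  then show ?thesis using assms(1) by linarith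
qed

text \<open>\<open>G A - 2 F B + E C\<close> is \<open>EG - F\<^sup>2\<close> times the trace of the form \<open>(A, B, C)\<close> with respect
  to the positive definite form \<open>(E, F, G)\<close>; it is evaluated at \<open>(G, -F)\<close> and \<open>(0, 1)\<close>.\<close>
lemma trace_nonpos_quadratic_form:
  fixes A B C E F G :: real
  assumes "\<And>a b. A * a\<^sup>2 + 2 * B * a * b + C * b\<^sup>2 \<le> 0" and "G > 0" "E * G - F\<^sup>2 > 0"
  shows "G * A - 2 * F * B + E * C \<le> 0"
proof -
  have "A * G\<^sup>2 + 2 * B * G * (- F) + C * (- F)\<^sup>2 + (E * G - F\<^sup>2) * C
      = G * (G * A - 2 * F * B + E * C)"
    by (simp add: algebra_simps power2_eq_square)
  moreover have "A * G\<^sup>2 + 2 * B * G * (- F) + C * (- F)\<^sup>2 + (E * G - F\<^sup>2) * C \<le> 0"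
    using assms(1)[of G "- F"] assms(1)[of 0 1] assms(3)
    by (simp add: add_nonpos_nonpos mult_nonneg_nonpos)
  ultimately show ?thesis using assms(2) by (simp add: mult_le_0_iff)
qed

text \<open>For a chart with first derivatives \<open>u, v\<close> and second derivatives \<open>uu, uv, vv\<close> at the
  point \<open>p\<close>, the left side is \<open>(EG - F\<^sup>2)/2\<close> times the trace of the coordinate Hessian of
  \<open>\<rho> = (norm (horizontal p))\<^sup>2\<close>; at a critical point of \<open>\<rho>\<close> this is its surface Laplacian.\<close>
lemma horizontal_hessian_trace_pos:
  fixes p u v n uu uv vv :: "real^3"
  assumes tangent: "cross3 u v \<noteq> 0" and normal: "n \<bullet> u = 0" "n \<bullet> v = 0" "norm n = 1"
    and critical: "horizontal p \<noteq> 0" "horizontal p \<bullet> u = 0" "horizontal p \<bullet> v = 0"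
    and stationary: "mean_curv n u v uu uv vv = \<alpha> * (n \<bullet> p) / (norm p)\<^sup>2"
    and "\<alpha> > -1"
  shows "(v \<bullet> v) * ((norm (horizontal u))\<^sup>2 + horizontal p \<bullet> uu)
       - 2 * (u \<bullet> v) * (horizontal u \<bullet> horizontal v + horizontal p \<bullet> uv)
       + (u \<bullet> u) * ((norm (horizontal v))\<^sup>2 + horizontal p \<bullet> vv) > 0"
proof -
  define E F G where "E = u \<bullet> u" and "F = u \<bullet> v" and "G = v \<bullet> v"
  define \<tau> where "\<tau> = n \<bullet> p"
  have EGF: "E * G - F\<^sup>2 = (norm (cross3 u v))\<^sup>2"
    unfolding E_def F_def G_def by (rule gram_det_eq_norm_cross)
  with tangent have "E * G - F\<^sup>2 > 0" by simp
  have p_eq: "horizontal p = \<tau> *\<^sub>R n"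
    unfolding \<tau>_def using horizontal_critical_eq_normal_scaled tangent normal critical .
  have "\<tau>\<^sup>2 = (norm (horizontal p))\<^sup>2" by (simp add: p_eq normal(3))
  then have "0 < \<tau>\<^sup>2" "\<tau>\<^sup>2 \<le> (norm p)\<^sup>2"
    using critical(1) norm_horizontal_le[of p] by (simp_all add: power_mono)
  then have "1 + \<alpha> * (\<tau>\<^sup>2 / (norm p)\<^sup>2) > 0"
    using \<open>\<alpha> > -1\<close> by (intro one_add_mult_pos divide_pos_pos) (auto simp: divide_le_eq_1)
  have curv: "G * (n \<bullet> uu) - 2 * F * (n \<bullet> uv) + E * (n \<bullet> vv) = (E * G - F\<^sup>2) * (\<alpha> * \<tau> / (norm p)\<^sup>2)"
    using stationary \<open>E * G - F\<^sup>2 > 0\<close> unfolding mean_curv_def Let_def E_def F_def G_def \<tau>_def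
    by (simp add: field_simps inner_commute)
  have "G * (horizontal p \<bullet> uu) - 2 * F * (horizontal p \<bullet> uv) + E * (horizontal p \<bullet> vv)
      = \<tau> * (G * (n \<bullet> uu) - 2 * F * (n \<bullet> uv) + E * (n \<bullet> vv))"
    unfolding p_eq inner_scaleR_left by (simp add: algebra_simps)
  also have "\<dots> = (E * G - F\<^sup>2) * (\<alpha> * (\<tau>\<^sup>2 / (norm p)\<^sup>2))"
    unfolding curv by (simp add: power2_eq_square)
  finally have "G * (horizontal p \<bullet> uu) - 2 * F * (horizontal p \<bullet> uv) + E * (horizontal p \<bullet> vv)
      = (E * G - F\<^sup>2) * (\<alpha> * (\<tau>\<^sup>2 / (norm p)\<^sup>2))" .
  moreover have "G * (norm (horizontal u))\<^sup>2 - 2 * F * (horizontal u \<bullet> horizontal v)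
      + E * (norm (horizontal v))\<^sup>2 \<ge> E * G - F\<^sup>2"
    using horizontal_gram_identity[of v u] EGF zero_le_power2[of "cross3 u v $ 3"]
    unfolding E_def F_def G_def by linarith
  moreover have "(E * G - F\<^sup>2) * (1 + \<alpha> * (\<tau>\<^sup>2 / (norm p)\<^sup>2)) > 0"
    using \<open>E * G - F\<^sup>2 > 0\<close> \<open>1 + \<alpha> * (\<tau>\<^sup>2 / (norm p)\<^sup>2) > 0\<close> by simp
  ultimately show ?thesis unfolding E_def F_def G_def by (simp add: algebra_simps)
qed

lemma horizontal_second_variation_pos:
  fixes p u v n uu uv vv :: "real^3"
  assumes tangent: "cross3 u v \<noteq> 0" and normal: "n \<bullet> u = 0" "n \<bullet> v = 0" "norm n = 1"
    and critical: "horizontal p \<noteq> 0" "horizontal p \<bullet> u = 0" "horizontal p \<bullet> v = 0"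
    and stationary: "mean_curv n u v uu uv vv = \<alpha> * (n \<bullet> p) / (norm p)\<^sup>2"
    and "\<alpha> > -1"
  obtains a b where "(norm (horizontal (a *\<^sub>R u + b *\<^sub>R v)))\<^sup>2
    + horizontal p \<bullet> (a\<^sup>2 *\<^sub>R uu + (2 * a * b) *\<^sub>R uv + b\<^sup>2 *\<^sub>R vv) > 0"
proof -
  define A B C where
    "A = (norm (horizontal u))\<^sup>2 + horizontal p \<bullet> uu"
    "B = horizontal u \<bullet> horizontal v + horizontal p \<bullet> uv"
    "C = (norm (horizontal v))\<^sup>2 + horizontal p \<bullet> vv"
  have form: "(norm (horizontal (a *\<^sub>R u + b *\<^sub>R v)))\<^sup>2
      + horizontal p \<bullet> (a\<^sup>2 *\<^sub>R uu + (2 * a * b) *\<^sub>R uv + b\<^sup>2 *\<^sub>R vv)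
      = A * a\<^sup>2 + 2 * B * a * b + C * b\<^sup>2" for a b
    by (simp add: horizontal_add horizontal_scaleR power2_norm_scaleR_add inner_add_right
        A_B_C_def algebra_simps)
  have "v \<noteq> 0" using tangent by (metis cross_zero_right)
  then have "v \<bullet> v > 0" by simp
  moreover have "(u \<bullet> u) * (v \<bullet> v) - (u \<bullet> v)\<^sup>2 > 0"
    using tangent by (simp add: gram_det_eq_norm_cross)
  moreover have "\<not> (v \<bullet> v) * A - 2 * (u \<bullet> v) * B + (u \<bullet> u) * C \<le> 0"
    using horizontal_hessian_trace_pos[OF assms] unfolding A_B_C_def by simp
  ultimately have "\<not> (\<forall>a b. A * a\<^sup>2 + 2 * B * a * b + C * b\<^sup>2 \<le> 0)"
    using trace_nonpos_quadratic_form by blast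
  then show ?thesis using that form by (metis not_le)
qed

lemma DERIV_local_max_second_derivative:
  fixes \<phi> \<phi>' :: "real \<Rightarrow> real"
  assumes "\<delta> > 0"
    and der: "\<And>t. \<bar>t - x\<bar> < \<delta> \<Longrightarrow> (\<phi> has_real_derivative \<phi>' t) (at t)"
    and der2: "(\<phi>' has_real_derivative d) (at x)"
    and max: "\<And>t. \<bar>t - x\<bar> < \<delta> \<Longrightarrow> \<phi> t \<le> \<phi> x"
  shows "\<phi>' x = 0" and "d \<le> 0"
proof -
  show crit: "\<phi>' x = 0"
    by (rule DERIV_local_max[OF der[of x] \<open>\<delta> > 0\<close>]) (use max \<open>\<delta> > 0\<close> in \<open>auto simp: dist_real_def\<close>)
  show "d \<le> 0"
  proof (rule ccontr)
    assume "\<not> d \<le> 0"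
    then obtain d1 where "d1 > 0" and incr: "\<And>h. h > 0 \<Longrightarrow> h < d1 \<Longrightarrow> \<phi>' x < \<phi>' (x + h)"
      using DERIV_pos_inc_right[OF der2] by force
    define h where "h = min d1 \<delta> / 2"
    have h: "h > 0" "h < d1" "h < \<delta>" using \<open>d1 > 0\<close> \<open>\<delta> > 0\<close> by (auto simp: h_def)
    obtain \<xi> where "x < \<xi>" "\<xi> < x + h" and mvt: "\<phi> (x + h) - \<phi> x = h * \<phi>' \<xi>"
      using MVT2[of x "x + h" \<phi> \<phi>'] der h by auto
    have "\<phi>' \<xi> > 0" using incr[of "\<xi> - x"] crit \<open>x < \<xi>\<close> \<open>\<xi> < x + h\<close> h by simp
    then have "\<phi> x < \<phi> (x + h)" using mvt h by (simp add: algebra_simps)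
    moreover have "\<phi> (x + h) \<le> \<phi> x" using max[of "x + h"] h by simp
    ultimately show False by simp
  qed
qed

lemma has_real_derivative_inner_linear:
  assumes "bounded_linear L"
    and "(x has_vector_derivative x') (at t)" "(y has_vector_derivative y') (at t)"
  shows "((\<lambda>s. L (x s) \<bullet> L (y s)) has_real_derivative (L x' \<bullet> L (y t) + L (x t) \<bullet> L y')) (at t)"
proof -
  have "((\<lambda>s. L (x s)) has_vector_derivative L x') (at t)" "((\<lambda>s. L (y s)) has_vector_derivative L y') (at t)"
    using bounded_linear.has_vector_derivative[OF assms(1)] assms(2,3) by blast+
  then show ?thesis
    unfolding has_real_derivative_iff_has_vector_derivative has_vector_derivative_def
    by (auto intro!: derivative_eq_intros simp: algebra_simps inner_commute)
qed

lemma has_vector_derivative_along_line: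
  assumes "(g has_derivative (\<lambda>h. fst h *\<^sub>R gu + snd h *\<^sub>R gv)) (at (z0 + t *\<^sub>R (a, b)))"
  shows "((\<lambda>s. g (z0 + s *\<^sub>R (a, b))) has_vector_derivative (a *\<^sub>R gu + b *\<^sub>R gv)) (at t)"
proof -
  have "((\<lambda>s. z0 + s *\<^sub>R (a, b)) has_derivative (\<lambda>s. s *\<^sub>R (a, b))) (at t)"
    by (auto intro!: derivative_eq_intros)
  from has_derivative_compose[OF this assms] show ?thesis
    unfolding has_vector_derivative_def by (simp add: scaleR_add_right)
qed

lemma has_vector_derivative_along_line_second:
  assumes "(gu has_derivative (\<lambda>h. fst h *\<^sub>R guu + snd h *\<^sub>R guv)) (at z0)"
    and "(gv has_derivative (\<lambda>h. fst h *\<^sub>R guv + snd h *\<^sub>R gvv)) (at z0)"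
  shows "((\<lambda>s. a *\<^sub>R gu (z0 + s *\<^sub>R (a, b)) + b *\<^sub>R gv (z0 + s *\<^sub>R (a, b)))
    has_vector_derivative (a\<^sup>2 *\<^sub>R guu + (2 * a * b) *\<^sub>R guv + b\<^sup>2 *\<^sub>R gvv)) (at 0)"
proof -
  have "((\<lambda>s. gu (z0 + s *\<^sub>R (a, b))) has_vector_derivative (a *\<^sub>R guu + b *\<^sub>R guv)) (at 0)"
    "((\<lambda>s. gv (z0 + s *\<^sub>R (a, b))) has_vector_derivative (a *\<^sub>R guv + b *\<^sub>R gvv)) (at 0)"
    by (rule has_vector_derivative_along_line; use assms in \<open>simp flip: zero_prod_def\<close>)+
  then have "((\<lambda>s. a *\<^sub>R gu (z0 + s *\<^sub>R (a, b)) + b *\<^sub>R gv (z0 + s *\<^sub>R (a, b))) has_vector_derivative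
      (a *\<^sub>R (a *\<^sub>R guu + b *\<^sub>R guv) + b *\<^sub>R (a *\<^sub>R guv + b *\<^sub>R gvv))) (at 0)"
    by (intro has_vector_derivative_add bounded_linear.has_vector_derivative[OF bounded_linear_scaleR_right])
  moreover have "a *\<^sub>R (a *\<^sub>R guu + b *\<^sub>R guv) + b *\<^sub>R (a *\<^sub>R guv + b *\<^sub>R gvv)
      = a\<^sup>2 *\<^sub>R guu + (2 * a * b) *\<^sub>R guv + b\<^sup>2 *\<^sub>R gvv"
    by (simp add: algebra_simps power2_eq_square flip: scaleR_add_left)
  ultimately show ?thesis by simp
qed

lemma add_scaleR_in_ball:
  fixes d :: "'a::real_normed_vector"
  assumes "\<bar>t\<bar> < e / (norm d + 1)"
  shows "z0 + t *\<^sub>R d \<in> ball z0 e"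
proof -
  have "norm d + 1 > 0" by (simp add: add_nonneg_pos)
  have "dist z0 (z0 + t *\<^sub>R d) = \<bar>t\<bar> * norm d"
    unfolding dist_norm by (metis add_diff_cancel_left' norm_minus_commute norm_scaleR)
  also have "\<dots> \<le> \<bar>t\<bar> * (norm d + 1)" by (simp add: mult_left_mono)
  also have "\<dots> < e" using assms \<open>norm d + 1 > 0\<close> by (simp add: pos_less_divide_eq)
  finally show ?thesis by simp
qed

lemma norm_linear_sq_local_max_directional:
  fixes g gu gv guu guv gvv :: "real \<times> real \<Rightarrow> 'a::real_normed_vector" and L :: "'a \<Rightarrow> 'b::real_inner"
  assumes L: "bounded_linear L" and "e > 0"
    and dg: "\<forall>z\<in>ball z0 e. (g has_derivative (\<lambda>h. fst h *\<^sub>R gu z + snd h *\<^sub>R gv z)) (at z)"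
    and dgu: "\<forall>z\<in>ball z0 e. (gu has_derivative (\<lambda>h. fst h *\<^sub>R guu z + snd h *\<^sub>R guv z)) (at z)"
    and dgv: "\<forall>z\<in>ball z0 e. (gv has_derivative (\<lambda>h. fst h *\<^sub>R guv z + snd h *\<^sub>R gvv z)) (at z)"
    and max: "\<And>z. z \<in> ball z0 e \<Longrightarrow> (norm (L (g z)))\<^sup>2 \<le> (norm (L (g z0)))\<^sup>2"
  shows "L (g z0) \<bullet> L (a *\<^sub>R gu z0 + b *\<^sub>R gv z0) = 0"
    and "(norm (L (a *\<^sub>R gu z0 + b *\<^sub>R gv z0)))\<^sup>2
         + L (g z0) \<bullet> L (a\<^sup>2 *\<^sub>R guu z0 + (2 * a * b) *\<^sub>R guv z0 + b\<^sup>2 *\<^sub>R gvv z0) \<le> 0"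
proof -
  define \<delta> where "\<delta> = e / (norm (a, b) + 1)"
  define \<gamma> where "\<gamma> s = z0 + s *\<^sub>R (a, b)" for s :: real
  define W where "W z = a *\<^sub>R gu z + b *\<^sub>R gv z" for z
  define Wd where "Wd = a\<^sup>2 *\<^sub>R guu z0 + (2 * a * b) *\<^sub>R guv z0 + b\<^sup>2 *\<^sub>R gvv z0"
  define \<phi> where "\<phi> s = L (g (\<gamma> s)) \<bullet> L (g (\<gamma> s))" for s
  define \<phi>' where "\<phi>' s = 2 * (L (g (\<gamma> s)) \<bullet> L (W (\<gamma> s)))" for s
  have "\<delta> > 0" using \<open>e > 0\<close> by (simp add: \<delta>_def add_nonneg_pos)
  have \<gamma>0: "\<gamma> 0 = z0" by (simp add: \<gamma>_def zero_prod_def)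
  have in_ball: "\<gamma> t \<in> ball z0 e" if "\<bar>t - 0\<bar> < \<delta>" for t
    using add_scaleR_in_ball[of t e "(a, b)" z0] that unfolding \<gamma>_def \<delta>_def by simp
  have g_line: "((\<lambda>s. g (\<gamma> s)) has_vector_derivative W (\<gamma> t)) (at t)" if "\<bar>t - 0\<bar> < \<delta>" for t
    unfolding \<gamma>_def W_def
    by (rule has_vector_derivative_along_line) (use dg in_ball[OF that] in \<open>simp add: \<gamma>_def\<close>)
  have der: "(\<phi> has_real_derivative \<phi>' t) (at t)" if "\<bar>t - 0\<bar> < \<delta>" for t
    using has_real_derivative_inner_linear[OF L g_line[OF that] g_line[OF that]]
    unfolding \<phi>_def \<phi>'_def by (simp add: inner_commute)
  have g_line0: "((\<lambda>s. g (\<gamma> s)) has_vector_derivative W z0) (at 0)"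
    using g_line[of 0] \<open>\<delta> > 0\<close> by (simp add: \<gamma>0)
  have W_line0: "((\<lambda>s. W (\<gamma> s)) has_vector_derivative Wd) (at 0)"
    unfolding W_def Wd_def \<gamma>_def
    by (rule has_vector_derivative_along_line_second) (use dgu dgv \<open>e > 0\<close> in auto)
  have "((\<lambda>s. L (g (\<gamma> s)) \<bullet> L (W (\<gamma> s)))
      has_real_derivative (L (W z0) \<bullet> L (W z0) + L (g z0) \<bullet> L Wd)) (at 0)"
    using has_real_derivative_inner_linear[OF L g_line0 W_line0] by (simp add: \<gamma>0)
  then have der2: "(\<phi>' has_real_derivative 2 * (L (W z0) \<bullet> L (W z0) + L (g z0) \<bullet> L Wd)) (at 0)"
    unfolding \<phi>'_def by (rule DERIV_cmult)
  have "\<phi> t \<le> \<phi> 0" if "\<bar>t - 0\<bar> < \<delta>" for t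
    using max in_ball[OF that] by (simp add: \<phi>_def \<gamma>0 power2_norm_eq_inner)
  note second_order = DERIV_local_max_second_derivative[OF \<open>\<delta> > 0\<close> der der2 this]
  show "L (g z0) \<bullet> L (a *\<^sub>R gu z0 + b *\<^sub>R gv z0) = 0"
    using second_order(1) by (simp add: \<phi>'_def \<gamma>0 W_def)
  show "(norm (L (a *\<^sub>R gu z0 + b *\<^sub>R gv z0)))\<^sup>2
         + L (g z0) \<bullet> L (a\<^sup>2 *\<^sub>R guu z0 + (2 * a * b) *\<^sub>R guv z0 + b\<^sup>2 *\<^sub>R gvv z0) \<le> 0"
    using second_order(2) by (simp add: W_def Wd_def power2_norm_eq_inner)
qed

lemma continuous_map_attains_max:
  fixes f :: "'a \<Rightarrow> real"
  assumes "compact_space T" "topspace T \<noteq> {}" "continuous_map T euclidean f"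
  obtains x where "x \<in> topspace T" "\<And>y. y \<in> topspace T \<Longrightarrow> f y \<le> f x"
proof -
  have "compact (f ` topspace T)"
    using image_compactin[of T "topspace T" euclidean f] assms by (simp add: compact_space_def)
  then show ?thesis
    using compact_attains_sup[of "f ` topspace T"] assms(2) that by auto
qed

lemma compact_immersed_surface_continuous:
  assumes "compact_immersed_surface T X"
  shows "continuous_map T euclidean X"
  unfolding continuous_map_openin_preimage_eq
proof (intro conjI allI impI)
  show "X \<in> topspace T \<rightarrow> topspace euclidean" by simp
  fix V :: "(real^3) set" assume "openin euclidean V"
  show "openin T (topspace T \<inter> X -` V)"
    unfolding openin_subopen[of T "topspace T \<inter> X -` V"]
  proof
    fix m assume m: "m \<in> topspace T \<inter> X -` V"
    then obtain phi U g gu gv guu guv gvv where lp: "local_param T X phi U g gu gv guu guv gvv"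
      and "m \<in> phi ` U"
      using assms unfolding compact_immersed_surface_def by blast
    from lp have oU: "openin T (phi ` U)"
      and hom: "homeomorphic_map (top_of_set U) (subtopology T (phi ` U)) phi"
      and gX: "\<forall>z\<in>U. g z = X (phi z)"
      unfolding local_param_def by auto
    from lp obtain W where "U \<subseteq> W"
      and dg: "\<forall>z\<in>W. (g has_derivative (\<lambda>h. fst h *\<^sub>R gu z + snd h *\<^sub>R gv z)) (at z)"
      unfolding local_param_def by blast
    have "continuous_on U g"
      using dg \<open>U \<subseteq> W\<close>
      by (intro has_derivative_continuous_on) (auto intro: has_derivative_at_withinI)
    then have "openin (top_of_set U) (U \<inter> g -` V)"
      using \<open>openin euclidean V\<close> by (intro continuous_openin_preimage[of U g UNIV]) auto
    then have "openin (subtopology T (phi ` U)) (phi ` (U \<inter> g -` V))"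
      using homeomorphic_map_openness[OF hom] by auto
    then have "openin T (phi ` (U \<inter> g -` V))" using openin_trans_full oU by blast
    moreover have "phi ` (U \<inter> g -` V) \<subseteq> topspace T \<inter> X -` V"
      using openin_subset[OF oU] gX by auto
    moreover have "m \<in> phi ` (U \<inter> g -` V)" using \<open>m \<in> phi ` U\<close> m gX by auto
    ultimately show "\<exists>S. openin T S \<and> m \<in> S \<and> S \<subseteq> topspace T \<inter> X -` V" by blast
  qed
qed

lemma local_param_snd_pos:
  assumes "local_param T X phi U g gu gv guu guv gvv" "z \<in> U" "phi z \<notin> surf_boundary T X"
  shows "snd z > 0"
proof -
  have "snd z \<noteq> 0" using assms unfolding surf_boundary_def by blast
  moreover have "z \<in> halfplane"
    using assms(1,2) openin_imp_subset unfolding local_param_def by blast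
  ultimately show ?thesis by (simp add: halfplane_def)
qed

lemma local_param_interior_ball:
  assumes "local_param T X phi U g gu gv guu guv gvv" "z0 \<in> U" "snd z0 > 0"
  obtains e where "e > 0" "ball z0 e \<subseteq> U"
    "\<forall>z\<in>ball z0 e. (g has_derivative (\<lambda>h. fst h *\<^sub>R gu z + snd h *\<^sub>R gv z)) (at z)"
    "\<forall>z\<in>ball z0 e. (gu has_derivative (\<lambda>h. fst h *\<^sub>R guu z + snd h *\<^sub>R guv z)) (at z)"
    "\<forall>z\<in>ball z0 e. (gv has_derivative (\<lambda>h. fst h *\<^sub>R guv z + snd h *\<^sub>R gvv z)) (at z)"
proof -
  from assms(1) obtain W where "U \<subseteq> W"
    and "\<forall>z\<in>W. (g has_derivative (\<lambda>h. fst h *\<^sub>R gu z + snd h *\<^sub>R gv z)) (at z)"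
      "\<forall>z\<in>W. (gu has_derivative (\<lambda>h. fst h *\<^sub>R guu z + snd h *\<^sub>R guv z)) (at z)"
      "\<forall>z\<in>W. (gv has_derivative (\<lambda>h. fst h *\<^sub>R guv z + snd h *\<^sub>R gvv z)) (at z)"
    unfolding local_param_def by blast
  moreover obtain e0 where "e0 > 0" and e0: "\<forall>z\<in>halfplane. dist z z0 < e0 \<longrightarrow> z \<in> U"
    using assms(1,2) unfolding local_param_def openin_euclidean_subtopology_iff by blast
  define e where "e = min e0 (snd z0)"
  have "ball z0 e \<subseteq> U"
  proof
    fix z assume "z \<in> ball z0 e"
    then have d: "dist z z0 < e" by (simp add: dist_commute)
    then have "snd z > 0"
      using dist_snd_le[of z z0] unfolding e_def dist_real_def by linarith
    then have "z \<in> halfplane" by (simp add: halfplane_def)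
    then show "z \<in> U" using e0 d by (simp add: e_def)
  qed
  moreover have "e > 0" using \<open>e0 > 0\<close> assms(3) by (simp add: e_def)
  ultimately show ?thesis using that by blast
qed

lemma alpha_stationary_no_interior_horizontal_max:
  assumes "\<alpha> > -1" and stationary: "alpha_stationary_wrt \<alpha> T X nu"
    and lp: "local_param T X phi U g gu gv guu guv gvv" and "z0 \<in> U" "snd z0 > 0"
    and "horizontal (X (phi z0)) \<noteq> 0"
    and max: "\<And>m. m \<in> topspace T \<Longrightarrow> norm (horizontal (X m)) \<le> norm (horizontal (X (phi z0)))"
  shows False
proof -
  obtain e where "e > 0" and ball: "ball z0 e \<subseteq> U" and derivs:
    "\<forall>z\<in>ball z0 e. (g has_derivative (\<lambda>h. fst h *\<^sub>R gu z + snd h *\<^sub>R gv z)) (at z)"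
    "\<forall>z\<in>ball z0 e. (gu has_derivative (\<lambda>h. fst h *\<^sub>R guu z + snd h *\<^sub>R guv z)) (at z)"
    "\<forall>z\<in>ball z0 e. (gv has_derivative (\<lambda>h. fst h *\<^sub>R guv z + snd h *\<^sub>R gvv z)) (at z)"
    using local_param_interior_ball[OF lp \<open>z0 \<in> U\<close> \<open>snd z0 > 0\<close>] by blast
  have gX: "\<forall>z\<in>U. g z = X (phi z)" and "phi ` U \<subseteq> topspace T"
    using lp openin_subset unfolding local_param_def by blast+
  have "(norm (horizontal (g z)))\<^sup>2 \<le> (norm (horizontal (g z0)))\<^sup>2" if "z \<in> ball z0 e" for z
  proof -
    have "z \<in> U" using that ball by blast
    then have "phi z \<in> topspace T" using \<open>phi ` U \<subseteq> topspace T\<close> by blast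
    then have "norm (horizontal (g z)) \<le> norm (horizontal (g z0))"
      using max gX \<open>z \<in> U\<close> \<open>z0 \<in> U\<close> by simp
    then show ?thesis by (simp add: power_mono)
  qed
  note directional = norm_linear_sq_local_max_directional[OF bounded_linear_horizontal \<open>e > 0\<close> derivs this]
  define p u v uu uv vv n where "p = g z0" "u = gu z0" "v = gv z0"
    "uu = guu z0" "uv = guv z0" "vv = gvv z0" "n = nu (phi z0)"
  note at_z0 = p_u_v_uu_uv_vv_n_def
  have "phi z0 \<in> topspace T" using \<open>z0 \<in> U\<close> \<open>phi ` U \<subseteq> topspace T\<close> by blast
  then have normal: "n \<bullet> u = 0" "n \<bullet> v = 0" "norm n = 1"
    and curv: "mean_curv n u v uu uv vv = \<alpha> * (n \<bullet> p) / (norm p)\<^sup>2"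
    using stationary lp \<open>z0 \<in> U\<close> unfolding alpha_stationary_wrt_def at_z0 by blast+
  have "cross3 u v \<noteq> 0" using lp \<open>z0 \<in> U\<close> unfolding local_param_def at_z0 by blast
  have "p = X (phi z0)" using gX \<open>z0 \<in> U\<close> by (simp add: at_z0)
  then have "horizontal p \<noteq> 0" using assms(6) by simp
  moreover have critical: "horizontal p \<bullet> u = 0" "horizontal p \<bullet> v = 0"
    using directional(1)[of 1 0] directional(1)[of 0 1] by (simp_all add: at_z0 inner_horizontal_right)
  ultimately obtain a b where "(norm (horizontal (a *\<^sub>R u + b *\<^sub>R v)))\<^sup>2
      + horizontal p \<bullet> (a\<^sup>2 *\<^sub>R uu + (2 * a * b) *\<^sub>R uv + b\<^sup>2 *\<^sub>R vv) > 0"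
    using horizontal_second_variation_pos[OF \<open>cross3 u v \<noteq> 0\<close> normal _ critical curv \<open>\<alpha> > -1\<close>]
    by blast
  moreover have "(norm (horizontal (a *\<^sub>R u + b *\<^sub>R v)))\<^sup>2
      + horizontal p \<bullet> (a\<^sup>2 *\<^sub>R uu + (2 * a * b) *\<^sub>R uv + b\<^sup>2 *\<^sub>R vv) \<le> 0"
    using directional(2)[of a b] by (simp add: at_z0 inner_horizontal_right)
  ultimately show False by simp
qed

lemma alpha_stationary_horizontal_max_in_boundary:
  assumes "\<alpha> > -1" "compact_immersed_surface T X" "alpha_stationary \<alpha> T X"
    and "m0 \<in> topspace T" "horizontal (X m0) \<noteq> 0"
    and max: "\<And>m. m \<in> topspace T \<Longrightarrow> norm (horizontal (X m)) \<le> norm (horizontal (X m0))"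
  shows "m0 \<in> surf_boundary T X"
proof (rule ccontr)
  assume "m0 \<notin> surf_boundary T X"
  obtain nu where nu: "alpha_stationary_wrt \<alpha> T X nu"
    using assms(3) unfolding alpha_stationary_def by blast
  obtain phi U g gu gv guu guv gvv where lp: "local_param T X phi U g gu gv guu guv gvv"
    and "m0 \<in> phi ` U"
    using assms(2,4) unfolding compact_immersed_surface_def by blast
  then obtain z0 where "z0 \<in> U" "phi z0 = m0" by blast
  then have "snd z0 > 0" using local_param_snd_pos[OF lp] \<open>m0 \<notin> surf_boundary T X\<close> by blast
  with alpha_stationary_no_interior_horizontal_max[OF assms(1) nu lp \<open>z0 \<in> U\<close>]
  show False using assms(5) max \<open>phi z0 = m0\<close> by blast
qed

theorem mainTheorem6:
  fixes T :: "'m topology" and X :: "'m \<Rightarrow> real^3" and \<alpha> c r :: real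
  assumes "\<alpha> > -1"
    and "compact_immersed_surface T X"
    and "alpha_stationary \<alpha> T X"
    and "r > 0"
    and "inj_on X (surf_boundary T X)"
    and "X ` surf_boundary T X = {p. p $ 3 = c \<and> (p $ 1)\<^sup>2 + (p $ 2)\<^sup>2 = r\<^sup>2}"
  shows "\<forall>m\<in>topspace T. (X m $ 1)\<^sup>2 + (X m $ 2)\<^sup>2 \<le> r\<^sup>2"
proof
  fix m assume "m \<in> topspace T"
  have "compact_space T" using assms(2) unfolding compact_immersed_surface_def by blast
  moreover have "continuous_map T euclidean (\<lambda>m. norm (horizontal (X m)))"
    using continuous_map_compose[OF compact_immersed_surface_continuous[OF assms(2)],
        of euclidean "\<lambda>p. norm (horizontal p)"]
    by (simp add: o_def continuous_on_norm linear_continuous_on bounded_linear_horizontal)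
  ultimately obtain m0 where "m0 \<in> topspace T"
    and max: "\<And>m. m \<in> topspace T \<Longrightarrow> norm (horizontal (X m)) \<le> norm (horizontal (X m0))"
    using continuous_map_attains_max \<open>m \<in> topspace T\<close> by blast
  have "norm (horizontal (X m0)) \<le> r"
  proof (cases "horizontal (X m0) = 0")
    case False
    then have "m0 \<in> surf_boundary T X"
      using alpha_stationary_horizontal_max_in_boundary[OF assms(1-3) \<open>m0 \<in> topspace T\<close>] max by blast
    then have "(norm (horizontal (X m0)))\<^sup>2 = r\<^sup>2" using assms(6) by (force simp: norm_horizontal_sq)
    then show ?thesis using \<open>r > 0\<close> by (simp add: power2_eq_iff_nonneg)
  qed (use \<open>r > 0\<close> in simp)
  then have "(norm (horizontal (X m)))\<^sup>2 \<le> r\<^sup>2"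
    using max[OF \<open>m \<in> topspace T\<close>] by (simp add: power_mono)
  then show "(X m $ 1)\<^sup>2 + (X m $ 2)\<^sup>2 \<le> r\<^sup>2" by (simp add: norm_horizontal_sq)
qed

end
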